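(* Let $\mathcal{T}$ be an MPQ-tree of an interval graph $G=(V,E)$, let $(x,y)\in E$ with $x$ over $y$ and $node(x)\neq node(y)$. If the $\langle x,y\rangle$-tree-path is rotable, then $(x,y)$ is an interval edge.
   Context: Graphs are finite and simple; for $G=(V,E)$ and $e\in E$, $G-e=(V,E\setminus\{e\})$. An edge $(x,y)\in E$ of an interval graph $G$ is an interval edge if $G-(x,y)$ is an interval graph. An MPQ-tree of an interval graph $G=(V,E)$, $V=\{1,\dots,n\}$, is a rooted plane tree whose nodes are P-nodes and Q-nodes. Each P-node carries a (possibly empty) set of vertices. A Q-node has $k\ge 3$ ordered positions $1,\dots,k$; position $i$ carries a set $S_i\subseteq V$ (the $i$-th section) and a child subtree $T_i$, which may be empty. Every vertex $v$ is assigned to exactly one node $node(v)$: either $v$ lies in the set of the P-node $node(v)$, or $node(v)$ is a Q-node and $v$ lies exactly in the sections $S_{l(v)},\dots,S_{r(v)}$ of it, with $l(v)<r(v)$. For a node with child subtrees $T_1,\dots,T_k$, $V_i$ denotes the set of vertices assigned to nodes of $T_i$ ($V_i=\emptyset$ if $T_i$ is empty). The maximal cliques of $G$ are in bijection with the descending paths from the root which at a P-node continue into one of its children (stopping if there is none) and at a Q-node choose a position $i$ and continue into $T_i$ (stopping if $T_i$ is empty); the clique is the union of the sets of the visited P-nodes and the chosen sections. Reading these cliques left to right gives a linear order of the maximal cliques, and the orders obtained this way after arbitrarily permuting children of P-nodes and reversing the positions of Q-nodes are exactly the orders of the maximal cliques of $G$ in which the cliques containing any fixed vertex are consecutive. Moreover,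 for every Q-node with sections $S_1,\dots,S_k$: (a) $V_1\neq\emptyset$ and $V_k\ne\emptyset$; (b) $S_1\subseteq S_2$ and $S_k\subseteq S_{k-1}$; (c) $S_{i-1}\cap S_i\neq\emptyset$ for $2\le i\le k$; (d) $S_{i-1}\neq S_i$ for $2\le i\le k$; (e) $(S_i\cap S_{i+1})\setminus S_1\neq\emptyset$ and $(S_{i-1}\cap S_i)\setminus S_k\neq\emptyset$ for $2\le i\le k-1$; (f) $(S_{i-1}\cup V_{i-1})\setminus S_i\neq\emptyset$ and $(S_i\cup V_i)\setminus S_{i-1}\neq\emptyset$ for $2\le i\le k$; and further (g) no empty P-node has an empty P-node as its parent, (h) no P-node has exactly one child whose root is a P-node, (i) every child subtree of a P-node is nonempty. We say $x$ is over $y$ if $node(x)$ is the lowest common ancestor of $node(x)$ and $node(y)$ in $\mathcal{T}$. For $x$ over $y$ with $node(x)\ne node(y)$, the $\langle x,y\rangle$-tree-path is the tree path $node(x)=n_1,n_2,\dots,n_t=node(y)$. For a Q-node with sections $S_1,\dots,S_k$, section $S_a$ is central if $1<a<k$, and for a vertex $v$ of that Q-node it is $v$-central if $l(v)<a<r(v)$ and $v$-non-central if $a\in\{l(v),r(v)\}$. The path goes through a central section if for some $1<i<t$, $n_i$ is a Q-node and $n_{i+1}$ lies in the subtree $T_a$ of a central section $S_a$ of $n_i$. The path starts in a central (resp. non-central) section if $n_1$ is a Q-node and $n_2$ lies in the subtree $T_a$ of an $x$-central (resp. $x$-non-central) section $S_a$ of $n_1$. It starts in a P-node if $n_1$ is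 a P-node, and ends in a P-node (resp. Q-node) if $n_t$ is a P-node (resp. Q-node). The path is almost rotable if it does not go through a central section and $n_t$ is a P-node that is a leaf of $\mathcal{T}$; it is rotable if it is almost rotable and it either starts in a P-node or starts in a non-central section. *)

theory Defs
  imports Complex_Main "HOL-Library.Multiset"
begin

definition simple_graph :: "nat set \<Rightarrow> nat set set \<Rightarrow> bool" where
  "simple_graph V E \<longleftrightarrow> finite V \<and>
     (\<forall>e\<in>E. \<exists>u v. u \<noteq> v \<and> u \<in> V \<and> v \<in> V \<and> e = {u, v})"

definition interval_graph :: "nat set \<Rightarrow> nat set set \<Rightarrow> bool" where
  "interval_graph V E \<longleftrightarrow> simple_graph V E \<and>
     (\<exists>a b :: nat \<Rightarrow> real. (\<forall>v\<in>V. a v \<le> b v) \<and>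
        (\<forall>u\<in>V. \<forall>v\<in>V. u \<noteq> v \<longrightarrow>
            ({u, v} \<in> E \<longleftrightarrow> max (a u) (a v) \<le> min (b u) (b v))))"

definition clique :: "nat set \<Rightarrow> nat set set \<Rightarrow> nat set \<Rightarrow> bool" where
  "clique V E C \<longleftrightarrow> C \<subseteq> V \<and> (\<forall>u\<in>C. \<forall>v\<in>C. u \<noteq> v \<longrightarrow> {u, v} \<in> E)"

definition max_cliques :: "nat set \<Rightarrow> nat set set \<Rightarrow> nat set set" where
  "max_cliques V E = {C. clique V E C \<and> \<not> (\<exists>C'. clique V E C' \<and> C \<subset> C')}"

definition interval_edge :: "nat set \<Rightarrow> nat set set \<Rightarrow> nat \<Rightarrow> nat \<Rightarrow> bool" where
  "interval_edge V E x y \<longleftrightarrow> interval_graph V E \<and> {x, y} \<in> E \<and> interval_graph V (E - {{x, y}})"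

text \<open>A P-node carries a vertex set and its (ordered, nonempty) child subtrees;
  a Q-node carries its positions in order, each position being a section together
  with a possibly empty child subtree (None = empty subtree).\<close>
datatype mpq = PNode "nat set" "mpq list" | QNode "(nat set \<times> mpq option) list"

text \<open>Nodes are addressed by paths from the root: at a P-node the i-th child (0-based),
  at a Q-node the subtree of position i (0-based).\<close>
fun sub :: "mpq \<Rightarrow> nat list \<Rightarrow> mpq option" where
  "sub t [] = Some t"
| "sub (PNode S ts) (i # p) = (if i < length ts then sub (ts ! i) p else None)"
| "sub (QNode secs) (i # p) =
     (if i < length secs then (case snd (secs ! i) of None \<Rightarrow> None | Some t \<Rightarrow> sub t p) else None)"

fun node_verts :: "mpq \<Rightarrow> nat set" where
  "node_verts (PNode S ts) = S"
| "node_verts (QNode secs) = (\<Union>i<length secs. fst (secs ! i))"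

definition all_verts :: "mpq \<Rightarrow> nat set" where
  "all_verts t = {v. \<exists>p t'. sub t p = Some t' \<and> v \<in> node_verts t'}"

text \<open>The list (left to right) of cliques given by descending root paths.\<close>
fun cliques :: "mpq \<Rightarrow> nat set list" where
  "cliques (PNode S ts) =
     (if ts = [] then [S] else concat (map (\<lambda>t. map ((\<union>) S) (cliques t)) ts))"
| "cliques (QNode secs) =
     concat (map (\<lambda>st. case snd st of None \<Rightarrow> [fst st]
                                  | Some t \<Rightarrow> map ((\<union>) (fst st)) (cliques t)) secs)"

inductive variant :: "mpq \<Rightarrow> mpq \<Rightarrow> bool" where
  var_P: "list_all2 variant ts us \<Longrightarrow> mset us = mset ws \<Longrightarrow> variant (PNode S ts) (PNode S ws)"
| var_Q: "list_all2 (\<lambda>a b. fst a = fst b \<and> rel_option variant (snd a) (snd b)) secs secs'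
          \<Longrightarrow> variant (QNode secs) (QNode secs')"
| var_Qrev: "list_all2 (\<lambda>a b. fst a = fst b \<and> rel_option variant (snd a) (snd b)) secs secs'
          \<Longrightarrow> variant (QNode secs) (QNode (rev secs'))"

definition consecutive :: "nat set list \<Rightarrow> nat \<Rightarrow> bool" where
  "consecutive L v \<longleftrightarrow> (\<exists>i j. \<forall>k<length L. v \<in> L ! k \<longleftrightarrow> i \<le> k \<and> k \<le> j)"

text \<open>1-based sections S_i and sets V_i of a Q-node.\<close>
definition sec :: "(nat set \<times> mpq option) list \<Rightarrow> nat \<Rightarrow> nat set" where
  "sec secs i = fst (secs ! (i - 1))"

definition secV :: "(nat set \<times> mpq option) list \<Rightarrow> nat \<Rightarrow> nat set" where
  "secV secs i = (case snd (secs ! (i - 1)) of None \<Rightarrow> {} | Some t \<Rightarrow> all_verts t)"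

definition Q_conditions :: "(nat set \<times> mpq option) list \<Rightarrow> bool" where
  "Q_conditions secs \<longleftrightarrow> (let k = length secs; S = sec secs; W = secV secs in
     3 \<le> k \<and>
     \<comment> \<open>(a)\<close> W 1 \<noteq> {} \<and> W k \<noteq> {} \<and>
     \<comment> \<open>(b)\<close> S 1 \<subseteq> S 2 \<and> S k \<subseteq> S (k - 1) \<and>
     \<comment> \<open>(c)\<close> (\<forall>i. 2 \<le> i \<and> i \<le> k \<longrightarrow> S (i - 1) \<inter> S i \<noteq> {}) \<and>
     \<comment> \<open>(d)\<close> (\<forall>i. 2 \<le> i \<and> i \<le> k \<longrightarrow> S (i - 1) \<noteq> S i) \<and>
     \<comment> \<open>(e)\<close> (\<forall>i. 2 \<le> i \<and> i \<le> k - 1 \<longrightarrow>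
                 (S i \<inter> S (i + 1)) - S 1 \<noteq> {} \<and> (S (i - 1) \<inter> S i) - S k \<noteq> {}) \<and>
     \<comment> \<open>(f)\<close> (\<forall>i. 2 \<le> i \<and> i \<le> k \<longrightarrow>
                 (S (i - 1) \<union> W (i - 1)) - S i \<noteq> {} \<and> (S i \<union> W i) - S (i - 1) \<noteq> {}))"

definition is_P :: "mpq \<Rightarrow> bool" where
  "is_P t \<longleftrightarrow> (\<exists>S ts. t = PNode S ts)"

definition MPQ_tree :: "nat set \<Rightarrow> nat set set \<Rightarrow> mpq \<Rightarrow> bool" where
  "MPQ_tree V E T \<longleftrightarrow>
     \<comment> \<open>vertices at nodes are vertices of G\<close>
     (\<forall>p t. sub T p = Some t \<longrightarrow> node_verts t \<subseteq> V) \<and>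
     \<comment> \<open>every vertex is assigned to exactly one node\<close>
     (\<forall>v\<in>V. \<exists>!p. \<exists>t. sub T p = Some t \<and> v \<in> node_verts t) \<and>
     \<comment> \<open>a vertex of a Q-node lies exactly in sections l(v)..r(v), l(v) < r(v)\<close>
     (\<forall>p secs. sub T p = Some (QNode secs) \<longrightarrow>
        (\<forall>v \<in> node_verts (QNode secs). \<exists>l r. l < r \<and> r < length secs \<and>
            (\<forall>i<length secs. v \<in> fst (secs ! i) \<longleftrightarrow> l \<le> i \<and> i \<le> r))) \<and>
     \<comment> \<open>maximal cliques in bijection with descending paths\<close>
     distinct (cliques T) \<and> set (cliques T) = max_cliques V E \<and>
     \<comment> \<open>clique orders\<close>
     {cliques T' | T'. variant T T'} =
        {L. distinct L \<and> set L = max_cliques V E \<and> (\<forall>v\<in>V. consecutive L v)} \<and>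
     \<comment> \<open>(a)--(f)\<close>
     (\<forall>p secs. sub T p = Some (QNode secs) \<longrightarrow> Q_conditions secs) \<and>
     \<comment> \<open>(g)\<close>
     (\<forall>p i ts us. sub T p = Some (PNode {} ts) \<longrightarrow> sub T (p @ [i]) \<noteq> Some (PNode {} us)) \<and>
     \<comment> \<open>(h)\<close>
     (\<forall>p S t. sub T p \<noteq> Some (PNode S [t]) \<or> \<not> is_P t)"
     \<comment> \<open>(i) holds by construction: children of P-nodes are trees\<close>

definition node :: "mpq \<Rightarrow> nat \<Rightarrow> nat list" where
  "node T v = (THE p. \<exists>t. sub T p = Some t \<and> v \<in> node_verts t)"

text \<open>0-based l(v), r(v) for a vertex of a Q-node.\<close>
definition lpos :: "mpq \<Rightarrow> nat \<Rightarrow> nat" where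
  "lpos T v = (case the (sub T (node T v)) of QNode secs \<Rightarrow> (LEAST i. v \<in> fst (secs ! i)) | _ \<Rightarrow> 0)"

definition rpos :: "mpq \<Rightarrow> nat \<Rightarrow> nat" where
  "rpos T v = (case the (sub T (node T v)) of
                 QNode secs \<Rightarrow> (GREATEST i. i < length secs \<and> v \<in> fst (secs ! i)) | _ \<Rightarrow> 0)"

text \<open>x is over y: node(x) is the lowest common ancestor of node(x) and node(y).\<close>
definition over :: "mpq \<Rightarrow> nat \<Rightarrow> nat \<Rightarrow> bool" where
  "over T x y \<longleftrightarrow> (\<exists>q. node T y = node T x @ q)"

text \<open>The tree path node(x)=n_1,...,n_t=node(y) consists of the prefixes of node(y)
  of length between length(node x) and length(node y); n_{i+1} is in T_a where a
  is the next path entry.\<close>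
definition through_central :: "mpq \<Rightarrow> nat \<Rightarrow> nat \<Rightarrow> bool" where
  "through_central T x y \<longleftrightarrow>
     (\<exists>m secs. length (node T x) < m \<and> m < length (node T y) \<and>
        sub T (take m (node T y)) = Some (QNode secs) \<and>
        0 < node T y ! m \<and> node T y ! m < length secs - 1)"

definition ends_in_P_leaf :: "mpq \<Rightarrow> nat \<Rightarrow> bool" where
  "ends_in_P_leaf T y \<longleftrightarrow> (\<exists>S. sub T (node T y) = Some (PNode S []))"

definition starts_in_P :: "mpq \<Rightarrow> nat \<Rightarrow> bool" where
  "starts_in_P T x \<longleftrightarrow> (\<exists>S ts. sub T (node T x) = Some (PNode S ts))"

definition starts_non_central :: "mpq \<Rightarrow> nat \<Rightarrow> nat \<Rightarrow> bool" where
  "starts_non_central T x y \<longleftrightarrow>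
     (\<exists>secs. sub T (node T x) = Some (QNode secs) \<and>
        (node T y ! length (node T x) = lpos T x \<or> node T y ! length (node T x) = rpos T x))"

definition almost_rotable :: "mpq \<Rightarrow> nat \<Rightarrow> nat \<Rightarrow> bool" where
  "almost_rotable T x y \<longleftrightarrow> \<not> through_central T x y \<and> ends_in_P_leaf T y"

definition rotable :: "mpq \<Rightarrow> nat \<Rightarrow> nat \<Rightarrow> bool" where
  "rotable T x y \<longleftrightarrow> almost_rotable T x y \<and> (starts_in_P T x \<or> starts_non_central T x y)"

end

theory Submission
  imports Defs "HOL-Library.Sublist"
begin

text \<open>
  A clique order in which y lies in a single clique C, x lies in C, and x lies in no clique
  before C yields an interval model of G - xy: read the intervals off the order and shrink y's
  interval to a point just before C.  Such an order comes from a variant of the MPQ-tree.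
  Since the path from node(x) down to the leaf node(y) passes Q-nodes only through end
  sections, permuting P-nodes and reversing Q-nodes along it makes the clique of node(y) the
  first clique of the subtree below node(x).  At node(x) itself the branch towards y leaves a
  P-node or, for a rotable path, a Q-node through the first or last section of x, so after a
  possible reversal no clique in front of it contains x.  Cliques outside the subtree of
  node(x) contain neither x nor y, because every vertex is assigned to a single node.
\<close>

lemma max_clique_containing:
  assumes "finite V" "clique V E C"
  obtains M where "M \<in> max_cliques V E" "C \<subseteq> M"
proof -
  have "finite {D. clique V E D}"
    using assms(1) by (rule finite_subset[rotated, OF finite_Pow_iff[THEN iffD2]]) (auto simp: clique_def)
  then obtain M where M: "clique V E M" "C \<subseteq> M" "\<forall>D. clique V E D \<longrightarrow> M \<subseteq> D \<longrightarrow> M = D"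
    using finite_has_maximal2[of "{D. clique V E D}" C] assms(2) by auto
  then have "\<not> (\<exists>C'. clique V E C' \<and> M \<subset> C')" by blast
  with M(1) have "M \<in> max_cliques V E" by (simp add: max_cliques_def)
  with M(2) that show ?thesis by blast
qed

lemma clique_order_intervals:
  assumes "finite V" "set L = max_cliques V E" "\<forall>v\<in>V. consecutive L v"
  obtains lo hi :: "nat \<Rightarrow> nat" where
    "\<And>v k. v \<in> V \<Longrightarrow> k < length L \<Longrightarrow> v \<in> L ! k \<longleftrightarrow> lo v \<le> k \<and> k \<le> hi v"
    "\<And>v. v \<in> V \<Longrightarrow> lo v \<le> hi v \<and> hi v < length L"
    "\<And>u v. u \<in> V \<Longrightarrow> v \<in> V \<Longrightarrow> u \<noteq> v \<Longrightarrow> {u, v} \<in> E \<longleftrightarrow> lo u \<le> hi v \<and> lo v \<le> hi u"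
proof -
  have span: "\<exists>i j. i \<le> j \<and> j < length L \<and> (\<forall>k<length L. v \<in> L ! k \<longleftrightarrow> i \<le> k \<and> k \<le> j)"
    if "v \<in> V" for v
  proof -
    have "clique V E {v}" using that by (simp add: clique_def)
    then obtain M where M: "M \<in> max_cliques V E" "{v} \<subseteq> M"
      by (rule max_clique_containing[OF assms(1)])
    then have "M \<in> set L" using assms(2) by simp
    then obtain k0 where k0: "k0 < length L" "L ! k0 = M" by (auto simp: in_set_conv_nth)
    have "consecutive L v" using assms(3) that by simp
    then obtain i j where ij: "\<forall>k<length L. v \<in> L ! k \<longleftrightarrow> i \<le> k \<and> k \<le> j"
      unfolding consecutive_def by (elim exE)
    have "v \<in> L ! k0" using k0(2) M(2) by simp
    then have "i \<le> k0" "k0 \<le> j" using ij k0(1) by auto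
    then show ?thesis using ij k0(1)
      by (intro exI[of _ i] exI[of _ "min j (length L - 1)"] conjI) auto
  qed
  then obtain lo hi where lohi: "\<And>v. v \<in> V \<Longrightarrow> lo v \<le> hi v \<and> hi v < length L \<and>
      (\<forall>k<length L. v \<in> L ! k \<longleftrightarrow> lo v \<le> k \<and> k \<le> hi v)"
    by metis
  have edge: "{u, v} \<in> E \<longleftrightarrow> lo u \<le> hi v \<and> lo v \<le> hi u"
    if "u \<in> V" "v \<in> V" "u \<noteq> v" for u v
  proof
    assume "{u, v} \<in> E"
    then have "clique V E {u, v}" using that by (auto simp: clique_def insert_commute)
    then obtain M where M: "M \<in> max_cliques V E" "{u, v} \<subseteq> M"
      by (rule max_clique_containing[OF assms(1)])
    then have "M \<in> set L" using assms(2) by simp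
    then obtain k where "k < length L" "L ! k = M" by (auto simp: in_set_conv_nth)
    with M(2) have "k < length L" "u \<in> L ! k" "v \<in> L ! k" by auto
    then show "lo u \<le> hi v \<and> lo v \<le> hi u"
      using lohi[OF that(1)] lohi[OF that(2)] by auto
  next
    assume overlap: "lo u \<le> hi v \<and> lo v \<le> hi u"
    define k where "k = max (lo u) (lo v)"
    have "k < length L" "u \<in> L ! k" "v \<in> L ! k"
      using overlap lohi[OF that(1)] lohi[OF that(2)] by (auto simp: k_def)
    moreover have "L ! k \<in> max_cliques V E" using assms(2) \<open>k < length L\<close> by (metis nth_mem)
    ultimately show "{u, v} \<in> E" using that by (auto simp: max_cliques_def clique_def)
  qed
  show ?thesis
    by (rule that) (use lohi edge in auto)
qed

lemma interval_graph_delete_edge: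
  assumes "simple_graph V E" "set L = max_cliques V E" "\<forall>v\<in>V. consecutive L v"
    and "L = P @ C # R" "x \<in> C" "y \<in> C" "y \<notin> \<Union>(set (P @ R))" "x \<notin> \<Union>(set P)"
    and "x \<in> V" "y \<in> V" "x \<noteq> y"
  shows "interval_graph V (E - {{x, y}})"
proof -
  have fin: "finite V" using assms(1) by (simp add: simple_graph_def)
  obtain lo hi where
    mem: "\<And>v k. v \<in> V \<Longrightarrow> k < length L \<Longrightarrow> v \<in> L ! k \<longleftrightarrow> lo v \<le> k \<and> k \<le> hi v"
    and span: "\<And>v. v \<in> V \<Longrightarrow> lo v \<le> hi v \<and> hi v < length L"
    and edge: "\<And>u v. u \<in> V \<Longrightarrow> v \<in> V \<Longrightarrow> u \<noteq> v \<Longrightarrow> {u, v} \<in> E \<longleftrightarrow> lo u \<le> hi v \<and> lo v \<le> hi u"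
    using clique_order_intervals[OF fin assms(2,3)] by blast
  define i where "i = length P"
  have in_P: "L ! k \<in> set P" if "k < i" for k
    using that by (simp add: assms(4) i_def nth_append)
  have in_R: "L ! k \<in> set R" if "i < k" "k < length L" for k
    using that by (simp add: assms(4) i_def nth_append)
  have i: "i < length L" "L ! i = C" by (simp_all add: assms(4) i_def)
  have y_at: "y \<in> L ! k \<longleftrightarrow> k = i" if "k < length L" for k
  proof (cases k i rule: linorder_cases)
    case less
    then show ?thesis using in_P assms(7) by fastforce
  next
    case equal
    then show ?thesis using i(2) assms(6) by simp
  next
    case greater
    then show ?thesis using in_R[OF greater that] assms(7) by fastforce
  qed
  have x_before: "x \<notin> L ! k" if "k < i" for k
    using in_P[OF that] assms(8) by blast
  have "y \<in> L ! lo y" "y \<in> L ! hi y"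
    using mem[OF assms(10)] span[OF assms(10)] by auto
  then have lo_y: "lo y = i" "hi y = i"
    using y_at span[OF assms(10)] by auto
  have "x \<in> L ! lo x" using mem[OF assms(9)] span[OF assms(9)] by auto
  moreover have "lo x \<le> i" using mem[OF assms(9) i(1)] i(2) assms(5) by simp
  ultimately have lo_x: "lo x = i" using x_before by (meson le_neq_implies_less)
  \<comment> \<open>Doubled indices: y shrinks to the point 2i-1 just left of clique i, where it still meets
      every interval covering clique i except that of x, which starts exactly at 2i; the other
      intervals starting at clique i are stretched left to 2i-1.\<close>
  define a where "a w = int (2 * lo w) - (if w \<noteq> x \<and> lo w = i then 1 else 0)" for w
  define b where "b w = (if w = y then int (2 * i) - 1 else int (2 * hi w))" for w
  have ab: "a w \<le> b w" if "w \<in> V" for w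
    using span[OF that] lo_y assms(11) by (auto simp: a_def b_def)
  have ab_iff: "a u \<le> b v \<longleftrightarrow> lo u \<le> hi v \<and> \<not> (u = x \<and> v = y)"
    if "u \<in> V" "v \<in> V" "u \<noteq> v" for u v
    using that lo_x lo_y assms(11) by (auto simp: a_def b_def)
  have "{u, v} \<in> E - {{x, y}} \<longleftrightarrow> max (a u) (a v) \<le> min (b u) (b v)"
    if "u \<in> V" "v \<in> V" "u \<noteq> v" for u v
    using edge[OF that] ab_iff[OF that] ab_iff[OF that(2,1)] that ab[OF that(1)] ab[OF that(2)]
    by (auto simp: doubleton_eq_iff)
  moreover have "simple_graph V (E - {{x, y}})" using assms(1) by (auto simp: simple_graph_def)
  ultimately show ?thesis
    unfolding interval_graph_def using ab
    by (intro conjI exI[of _ "\<lambda>w. real_of_int (a w)"] exI[of _ "\<lambda>w. real_of_int (b w)"])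
       (simp_all flip: of_int_max of_int_min)
qed

definition assigned_at :: "mpq \<Rightarrow> nat \<Rightarrow> nat list \<Rightarrow> bool" where
  "assigned_at t v p \<longleftrightarrow> (\<exists>u. sub t p = Some u \<and> v \<in> node_verts u)"

definition assigned_outside :: "mpq \<Rightarrow> nat list \<Rightarrow> nat \<Rightarrow> bool" where
  "assigned_outside t p v \<longleftrightarrow> (\<exists>p'. assigned_at t v p' \<and> \<not> prefix p p')"

definition section_cliques :: "nat set \<times> mpq option \<Rightarrow> nat set list" where
  "section_cliques st =
     (case snd st of None \<Rightarrow> [fst st] | Some t \<Rightarrow> map ((\<union>) (fst st)) (cliques t))"

lemma cliques_QNode: "cliques (QNode secs) = concat (map section_cliques secs)"
  by (simp add: section_cliques_def[abs_def])

lemma sub_append: "sub t (p @ q) = (case sub t p of None \<Rightarrow> None | Some u \<Rightarrow> sub u q)"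
proof (induction p arbitrary: t)
  case (Cons i p)
  then show ?case by (cases t) (simp_all split: option.split)
qed simp

lemma sub_Cons_child: "sub t [a] = Some ta \<Longrightarrow> sub t (a # p) = sub ta p"
  using sub_append[of t "[a]" p] by simp

lemma sub_ConsE:
  assumes "sub t (a # p) = Some s"
  obtains ta where "sub t [a] = Some ta" "sub ta p = Some s"
  using assms sub_append[of t "[a]" p] by (auto split: option.splits)

lemma assigned_at_append: "sub t p = Some u \<Longrightarrow> assigned_at u v q \<Longrightarrow> assigned_at t v (p @ q)"
  by (simp add: assigned_at_def sub_append)

lemma assigned_outside_root: "v \<in> node_verts t \<Longrightarrow> p \<noteq> [] \<Longrightarrow> assigned_outside t p v"
  by (auto simp: assigned_outside_def assigned_at_def intro!: exI[of _ "[]"])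

lemma assigned_outside_Cons:
  "assigned_outside t [i] v \<Longrightarrow> assigned_outside t (i # p) v"
  unfolding assigned_outside_def by (metis Cons_prefix_Cons Nil_prefix prefix_order.trans)

lemma assigned_outside_child:
  "sub t [i] = Some u \<Longrightarrow> assigned_outside u p v \<Longrightarrow> assigned_outside t (i # p) v"
  unfolding assigned_outside_def by (metis Cons_prefix_Cons append_Cons append_Nil assigned_at_append)

lemma variant_refl: "variant t t"
proof (induction t)
  case (PNode S ts)
  then show ?case by (auto intro!: var_P list.rel_refl_strong)
next
  case (QNode secs)
  then show ?case by (auto intro!: var_Q list.rel_refl_strong option.rel_refl_strong)
qed

lemma assigned_at_of_clique: "c \<in> set (cliques t) \<Longrightarrow> v \<in> c \<Longrightarrow> \<exists>p. assigned_at t v p"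
proof (induction t arbitrary: c)
  case (PNode S ts)
  show ?case
  proof (cases "ts = [] \<or> v \<in> S")
    case True
    then show ?thesis using PNode.prems by (auto intro!: exI[of _ "[]"] simp: assigned_at_def)
  next
    case False
    then obtain u c' where u: "u \<in> set ts" "c' \<in> set (cliques u)" "v \<in> c'"
      using PNode.prems by auto
    with PNode.IH obtain p where "assigned_at u v p" by blast
    moreover obtain j where "j < length ts" "u = ts ! j" using u(1) by (metis in_set_conv_nth)
    ultimately have "assigned_at (PNode S ts) v (j # p)" by (simp add: assigned_at_def)
    then show ?thesis ..
  qed
next
  case (QNode secs)
  obtain st where "st \<in> set secs" "c \<in> set (section_cliques st)"
    using QNode.prems(1) unfolding cliques_QNode by auto
  then obtain j where j: "j < length secs" "c \<in> set (section_cliques (secs ! j))"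
    by (metis in_set_conv_nth)
  show ?case
  proof (cases "v \<in> fst (secs ! j)")
    case True
    then show ?thesis using j(1) by (auto simp: assigned_at_def intro!: exI[of _ "[]"])
  next
    case False
    then obtain u c' where u: "snd (secs ! j) = Some u" "c' \<in> set (cliques u)" "v \<in> c'"
      using j(2) QNode.prems by (auto simp: section_cliques_def split: option.splits)
    then have "Some u \<in> Basic_BNFs.snds (secs ! j)" by (cases "secs ! j") auto
    then obtain p where "assigned_at u v p"
      using QNode.IH[OF nth_mem[OF j(1)] _ _ u(2,3)] by blast
    with j(1) u(1) have "assigned_at (QNode secs) v (j # p)" by (simp add: assigned_at_def)
    then show ?thesis ..
  qed
qed

lemma section_clique_vertex:
  assumes "j < length secs" "c \<in> set (section_cliques (secs ! j))" "v \<in> c"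
  shows "v \<in> fst (secs ! j) \<or> (\<exists>p. assigned_at (QNode secs) v (j # p))"
proof (cases "snd (secs ! j)")
  case (Some u)
  with assms obtain c' where "c = fst (secs ! j) \<union> c'" "c' \<in> set (cliques u)"
    by (auto simp: section_cliques_def)
  with assms(1,3) Some assigned_at_of_clique[of c' u v] show ?thesis
    by (auto simp: assigned_at_def)
qed (use assms in \<open>simp add: section_cliques_def\<close>)

lemma in_set_take_nth: "x \<in> set (take a xs) \<Longrightarrow> \<exists>j<length xs. j < a \<and> x = xs ! j"
  by (auto simp: in_set_conv_nth)

lemma in_set_drop_nth: "x \<in> set (drop a xs) \<Longrightarrow> \<exists>j<length xs. a \<le> j \<and> x = xs ! j"
  by (auto simp: in_set_conv_nth) (metis add.commute le_add2 less_diff_conv)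

lemma in_set_take_drop_nth:
  "x \<in> set (take a xs) \<union> set (drop (Suc a) xs) \<Longrightarrow> \<exists>j<length xs. j \<noteq> a \<and> x = xs ! j"
  by (auto dest!: in_set_take_nth in_set_drop_nth)

lemma variant_PNode_child_first:
  assumes "i < length ts" "variant (ts ! i) u"
  shows "variant (PNode S ts) (PNode S (u # take i ts @ drop (Suc i) ts))"
proof (rule var_P)
  show "list_all2 variant ts (ts[i := u])"
    using assms by (auto simp: list_all2_conv_all_nth nth_list_update variant_refl)
  show "mset (ts[i := u]) = mset (u # take i ts @ drop (Suc i) ts)"
    using assms(1) by (simp add: upd_conv_take_nth_drop)
qed

lemma variant_QNode_child:
  assumes "a < length secs" "snd (secs ! a) = Some ta" "variant ta u"
  shows "variant (QNode secs) (QNode (take a secs @ (fst (secs ! a), Some u) # drop (Suc a) secs))"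
    and "variant (QNode secs)
           (QNode (rev (drop (Suc a) secs) @ (fst (secs ! a), Some u) # rev (take a secs)))"
proof -
  let ?secs' = "secs[a := (fst (secs ! a), Some u)]"
  have rel: "list_all2 (\<lambda>s s'. fst s = fst s' \<and> rel_option variant (snd s) (snd s')) secs ?secs'"
    using assms
    by (auto simp: list_all2_conv_all_nth nth_list_update
             intro!: option.rel_refl_strong variant_refl)
  have upd: "?secs' = take a secs @ (fst (secs ! a), Some u) # drop (Suc a) secs"
    using assms(1) by (simp add: upd_conv_take_nth_drop)
  show "variant (QNode secs) (QNode (take a secs @ (fst (secs ! a), Some u) # drop (Suc a) secs))"
    using var_Q[OF rel] upd by simp
  show "variant (QNode secs)
          (QNode (rev (drop (Suc a) secs) @ (fst (secs ! a), Some u) # rev (take a secs)))"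
    using var_Qrev[OF rel] upd by simp
qed

lemma PNode_clique_outside:
  assumes "j < length ts" "j \<noteq> a" "c \<in> set (cliques (ts ! j))" "v \<in> c"
  shows "assigned_outside (PNode S ts) [a] v"
proof -
  obtain p where "assigned_at (ts ! j) v p" using assms(3,4) by (blast dest: assigned_at_of_clique)
  then have "assigned_at (PNode S ts) v (j # p)" using assms(1) by (simp add: assigned_at_def)
  then show ?thesis using assms(2) by (auto simp: assigned_outside_def)
qed

lemma QNode_clique_outside:
  assumes "j < length secs" "j \<noteq> a" "c \<in> set (section_cliques (secs ! j))" "v \<in> c"
  shows "assigned_outside (QNode secs) [a] v"
  using section_clique_vertex[OF assms(1,3,4)]
proof
  assume "v \<in> fst (secs ! j)"
  then show ?thesis using assms(1) by (auto intro!: assigned_outside_root)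
next
  assume "\<exists>p. assigned_at (QNode secs) v (j # p)"
  then show ?thesis using assms(2) by (auto simp: assigned_outside_def)
qed

lemma PNode_child_arrangement:
  assumes "a < length ts" "variant (ts ! a) u"
  obtains t' A where "variant (PNode S ts) t'" "cliques t' = map ((\<union>) S) (cliques u) @ A"
    "\<forall>v\<in>S \<union> \<Union>(set A). assigned_outside (PNode S ts) [a] v"
proof -
  define others where "others = take a ts @ drop (Suc a) ts"
  define A where "A = concat (map (\<lambda>w. map ((\<union>) S) (cliques w)) others)"
  have "variant (PNode S ts) (PNode S (u # others))"
    using variant_PNode_child_first[OF assms] by (simp add: others_def)
  moreover have "cliques (PNode S (u # others)) = map ((\<union>) S) (cliques u) @ A"
    by (simp add: A_def)
  moreover have "assigned_outside (PNode S ts) [a] v" if "v \<in> S \<union> \<Union>(set A)" for v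
  proof (cases "v \<in> S")
    case True
    then show ?thesis by (simp add: assigned_outside_root)
  next
    case False
    with that obtain w c where "w \<in> set others" "c \<in> set (cliques w)" "v \<in> c"
      by (auto simp: A_def)
    then show ?thesis
      using in_set_take_drop_nth[of w a ts] PNode_clique_outside[of _ ts a c v S]
      by (auto simp: others_def)
  qed
  ultimately show ?thesis using that by blast
qed

lemma QNode_child_arrangement:
  fixes flip :: bool
  assumes "a < length secs" "snd (secs ! a) = Some ta" "variant ta u"
  obtains t' B A where "variant (QNode secs) t'"
    "cliques t' = B @ map ((\<union>) (fst (secs ! a))) (cliques u) @ A"
    "\<forall>v\<in>fst (secs ! a) \<union> \<Union>(set (B @ A)). assigned_outside (QNode secs) [a] v"
    "\<forall>c\<in>set B. \<exists>j<length secs.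
        (if flip then a < j else j < a) \<and> c \<in> set (section_cliques (secs ! j))"
proof -
  define L where "L = fst (secs ! a)"
  define side where "side j \<longleftrightarrow> (if flip then a < j else j < a)" for j
  obtain Bs As where var: "variant (QNode secs) (QNode (Bs @ (L, Some u) # As))"
    and Bs: "\<forall>st\<in>set Bs. \<exists>j<length secs. side j \<and> st = secs ! j"
    and sib: "\<forall>st\<in>set Bs \<union> set As. \<exists>j<length secs. j \<noteq> a \<and> st = secs ! j"
  proof (cases flip)
    case True
    show ?thesis
      using that[of "rev (drop (Suc a) secs)" "rev (take a secs)"]
        variant_QNode_child(2)[OF assms] in_set_take_drop_nth[of _ a secs]
        in_set_drop_nth[of _ "Suc a" secs]
      by (fastforce simp: L_def side_def True)
  next
    case False
    show ?thesis
      using that[of "take a secs" "drop (Suc a) secs"]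
        variant_QNode_child(1)[OF assms] in_set_take_drop_nth[of _ a secs]
        in_set_take_nth[of _ a secs]
      by (fastforce simp: L_def side_def False)
  qed
  let ?B = "concat (map section_cliques Bs)" and ?A = "concat (map section_cliques As)"
  have "cliques (QNode (Bs @ (L, Some u) # As)) = ?B @ map ((\<union>) L) (cliques u) @ ?A"
    unfolding cliques_QNode by (simp add: section_cliques_def)
  moreover have "assigned_outside (QNode secs) [a] v" if "v \<in> L \<union> \<Union>(set (?B @ ?A))" for v
  proof (cases "v \<in> L")
    case True
    then show ?thesis using assms(1) by (auto simp: L_def intro!: assigned_outside_root)
  next
    case False
    with that obtain st c where "st \<in> set Bs \<union> set As" "c \<in> set (section_cliques st)" "v \<in> c"
      by auto
    moreover from this(1) sib obtain j where "j < length secs" "j \<noteq> a" "st = secs ! j"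
      by blast
    ultimately show ?thesis by (blast intro: QNode_clique_outside)
  qed
  moreover have "\<exists>j<length secs. side j \<and> c \<in> set (section_cliques (secs ! j))"
    if "c \<in> set ?B" for c
    using that Bs by fastforce
  ultimately show ?thesis
    using that[OF var] by (auto simp: L_def side_def)
qed

lemma variant_child:
  fixes flip :: bool
  assumes "sub t [a] = Some ta" "variant ta u"
  obtains t' L B A where "variant t t'" "cliques t' = B @ map ((\<union>) L) (cliques u) @ A"
    "\<forall>v\<in>L \<union> \<Union>(set (B @ A)). assigned_outside t [a] v"
    "is_P t \<Longrightarrow> B = [] \<and> node_verts t \<subseteq> L"
    "\<And>secs. t = QNode secs \<Longrightarrow> L = fst (secs ! a) \<and> (\<forall>c\<in>set B. \<exists>j<length secs.
        (if flip then a < j else j < a) \<and> c \<in> set (section_cliques (secs ! j)))"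
proof (cases t)
  case (PNode S ts)
  with assms have "a < length ts" "variant (ts ! a) u" by (auto split: if_splits)
  then obtain t' A where "variant t t'" "cliques t' = map ((\<union>) S) (cliques u) @ A"
    "\<forall>v\<in>S \<union> \<Union>(set A). assigned_outside t [a] v"
    unfolding PNode by (rule PNode_child_arrangement)
  then show ?thesis by (intro that[where B = "[]" and L = S]) (simp_all add: PNode is_P_def)
next
  case (QNode secs)
  with assms(1) have "a < length secs" "snd (secs ! a) = Some ta"
    by (auto split: if_splits option.splits)
  then obtain t' B A where "variant t t'" "cliques t' = B @ map ((\<union>) (fst (secs ! a))) (cliques u) @ A"
    "\<forall>v\<in>fst (secs ! a) \<union> \<Union>(set (B @ A)). assigned_outside t [a] v"
    "\<forall>c\<in>set B. \<exists>j<length secs.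
        (if flip then a < j else j < a) \<and> c \<in> set (section_cliques (secs ! j))"
    unfolding QNode by (rule QNode_child_arrangement[OF _ _ assms(2)])
  then show ?thesis by (intro that[where L = "fst (secs ! a)"]) (simp_all add: QNode is_P_def)
qed

lemma variant_in_context:
  assumes "sub t p = Some s" "variant s s'"
  obtains t' pre U post where "variant t t'" "cliques t' = pre @ map ((\<union>) U) (cliques s') @ post"
    "\<forall>v\<in>U \<union> \<Union>(set (pre @ post)). assigned_outside t p v"
  using assms
proof (induction p arbitrary: t thesis)
  case Nil
  show ?case using Nil.prems(1)[of s' "[]" "{}" "[]"] Nil.prems(2,3) by simp
next
  case (Cons a p)
  from Cons.prems(2) obtain ta where ta: "sub t [a] = Some ta" "sub ta p = Some s"
    by (rule sub_ConsE)
  obtain t1 pre1 U1 post1 where IH: "variant ta t1"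
    "cliques t1 = pre1 @ map ((\<union>) U1) (cliques s') @ post1"
    "\<forall>v\<in>U1 \<union> \<Union>(set (pre1 @ post1)). assigned_outside ta p v"
    by (rule Cons.IH[OF _ ta(2) Cons.prems(3)])
  obtain t' L B A where t': "variant t t'" "cliques t' = B @ map ((\<union>) L) (cliques t1) @ A"
    "\<forall>v\<in>L \<union> \<Union>(set (B @ A)). assigned_outside t [a] v"
    using variant_child[OF ta(1) IH(1), where flip = False] by metis
  have "cliques t' = (B @ map ((\<union>) L) pre1) @ map ((\<union>) (L \<union> U1)) (cliques s') @
      (map ((\<union>) L) post1 @ A)"
    using t'(2) IH(2) by (simp add: Un_assoc)
  moreover have "\<forall>v\<in>(L \<union> U1) \<union> \<Union>(set ((B @ map ((\<union>) L) pre1) @ (map ((\<union>) L) post1 @ A))).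
      assigned_outside t (a # p) v"
  proof
    fix v assume "v \<in> (L \<union> U1) \<union> \<Union>(set ((B @ map ((\<union>) L) pre1) @ (map ((\<union>) L) post1 @ A)))"
    then have "v \<in> L \<union> \<Union>(set (B @ A)) \<or> v \<in> U1 \<union> \<Union>(set (pre1 @ post1))"
      by (auto split: if_splits)
    then show "assigned_outside t (a # p) v"
      using t'(3) IH(3) assigned_outside_Cons assigned_outside_child[OF ta(1)] by blast
  qed
  ultimately show ?case using Cons.prems(1)[OF t'(1)] by blast
qed

lemma variant_leaf_first:
  assumes "sub t r = Some (PNode S [])"
    and "\<forall>m<length r. \<forall>secs. sub t (take m r) = Some (QNode secs) \<longrightarrow>
           r ! m = 0 \<or> r ! m = length secs - 1"
  obtains t' C R where "variant t t'" "cliques t' = C # R" "S \<subseteq> C"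
    "is_P t \<Longrightarrow> node_verts t \<subseteq> C" "\<forall>v\<in>\<Union>(set R). assigned_outside t r v"
  using assms
proof (induction r arbitrary: t thesis)
  case Nil
  show ?case using Nil.prems(1)[of t S "[]"] Nil.prems(2) by (simp add: variant_refl is_P_def)
next
  case (Cons a r)
  from Cons.prems(2) obtain ta where ta: "sub t [a] = Some ta" "sub ta r = Some (PNode S [])"
    by (rule sub_ConsE)
  have "\<forall>m<length r. \<forall>secs. sub ta (take m r) = Some (QNode secs) \<longrightarrow>
      r ! m = 0 \<or> r ! m = length secs - 1"
    using Cons.prems(3) sub_Cons_child[OF ta(1)] by auto
  then obtain t1 C1 R1 where IH: "variant ta t1" "cliques t1 = C1 # R1" "S \<subseteq> C1"
    "\<forall>v\<in>\<Union>(set R1). assigned_outside ta r v"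
    using Cons.IH[OF _ ta(2)] by metis
  obtain t' L B A where t': "variant t t'" "cliques t' = B @ map ((\<union>) L) (cliques t1) @ A"
    "\<forall>v\<in>L \<union> \<Union>(set (B @ A)). assigned_outside t [a] v"
    "is_P t \<Longrightarrow> B = [] \<and> node_verts t \<subseteq> L"
    "\<And>secs. t = QNode secs \<Longrightarrow> \<forall>c\<in>set B. \<exists>j<length secs.
        (if a \<noteq> 0 then a < j else j < a) \<and> c \<in> set (section_cliques (secs ! j))"
    using variant_child[OF ta(1) IH(1), where flip = "a \<noteq> 0"] by metis
  have "B = []"
  proof (cases t)
    case (PNode S0 ts)
    then show ?thesis using t'(4) by (simp add: is_P_def)
  next
    case (QNode secs)
    have "a < length secs" using ta(1) QNode by (simp split: if_splits)
    moreover have "a = 0 \<or> a = length secs - 1"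
      using Cons.prems(3)[rule_format, of 0 secs] QNode by simp
    ultimately have "\<not> (\<exists>j<length secs. if a \<noteq> 0 then a < j else j < a)" by auto
    then show ?thesis using t'(5)[OF QNode] by (cases B) auto
  qed
  then have "cliques t' = (L \<union> C1) # (map ((\<union>) L) R1 @ A)"
    using t'(2) IH(2) by simp
  moreover have "\<forall>v\<in>\<Union>(set (map ((\<union>) L) R1 @ A)). assigned_outside t (a # r) v"
  proof
    fix v assume "v \<in> \<Union>(set (map ((\<union>) L) R1 @ A))"
    then have "v \<in> L \<union> \<Union>(set (B @ A)) \<or> v \<in> \<Union>(set R1)"
      by (auto split: if_splits)
    then show "assigned_outside t (a # r) v"
      using t'(3) IH(4) assigned_outside_Cons assigned_outside_child[OF ta(1)] by blast
  qed
  ultimately show ?case using Cons.prems(1)[OF t'(1)] t'(4) IH(3) \<open>B = []\<close> by blast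
qed

lemma QNode_leaf_first_arrangement:
  assumes leaf: "sub (QNode secs) (a # r) = Some (PNode S [])"
    and ends: "\<forall>m<length r. \<forall>secs'. sub (QNode secs) (a # take m r) = Some (QNode secs') \<longrightarrow>
                 r ! m = 0 \<or> r ! m = length secs' - 1"
    and x: "x \<in> node_verts (QNode secs)" "\<And>p. assigned_at (QNode secs) x p \<Longrightarrow> p = []"
    and span: "\<And>i. i < length secs \<Longrightarrow> x \<in> fst (secs ! i) \<longleftrightarrow> l \<le> i \<and> i \<le> h"
    and a: "a = l \<or> a = h"
  obtains s' P C R where "variant (QNode secs) s'" "cliques s' = P @ C # R" "S \<subseteq> C" "x \<in> C"
    "x \<notin> \<Union>(set P)" "\<forall>v\<in>\<Union>(set (P @ R)). assigned_outside (QNode secs) (a # r) v"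
proof -
  obtain ta where ta: "sub (QNode secs) [a] = Some ta" "sub ta r = Some (PNode S [])"
    using leaf by (rule sub_ConsE)
  have "\<forall>m<length r. \<forall>secs. sub ta (take m r) = Some (QNode secs) \<longrightarrow>
      r ! m = 0 \<or> r ! m = length secs - 1"
    using ends sub_Cons_child[OF ta(1)] by simp
  then obtain t1 C1 R1 where t1: "variant ta t1" "cliques t1 = C1 # R1" "S \<subseteq> C1"
    "\<forall>v\<in>\<Union>(set R1). assigned_outside ta r v"
    using variant_leaf_first[OF ta(2)] by metis
  \<comment> \<open>Reversing the node when the path leaves through x's last section puts only
      sections beyond x's span in front of it.\<close>
  obtain s' L B A where s': "variant (QNode secs) s'" "cliques s' = B @ map ((\<union>) L) (cliques t1) @ A"
    "\<forall>v\<in>L \<union> \<Union>(set (B @ A)). assigned_outside (QNode secs) [a] v"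
    "L = fst (secs ! a)" "\<forall>c\<in>set B. \<exists>j<length secs.
        (if a \<noteq> l then a < j else j < a) \<and> c \<in> set (section_cliques (secs ! j))"
    using variant_child[OF ta(1) t1(1), where flip = "a \<noteq> l"] by metis
  have "a < length secs" using ta(1) by (simp split: if_splits)
  moreover have "l \<le> h" using x(1) span by auto
  ultimately have "x \<in> L" using span a s'(4) by auto
  have "x \<notin> c" if "c \<in> set B" for c
  proof
    assume "x \<in> c"
    from s'(5) that obtain j where j: "j < length secs" "if a \<noteq> l then a < j else j < a"
      "c \<in> set (section_cliques (secs ! j))" by blast
    from section_clique_vertex[OF j(1,3) \<open>x \<in> c\<close>] show False
    proof
      assume "x \<in> fst (secs ! j)"
      then show False using span[OF j(1)] j(2) a by (auto split: if_splits)
    next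
      assume "\<exists>p. assigned_at (QNode secs) x (j # p)"
      then show False using x(2) by blast
    qed
  qed
  moreover have "\<forall>v\<in>\<Union>(set (B @ map ((\<union>) L) R1 @ A)). assigned_outside (QNode secs) (a # r) v"
  proof
    fix v assume "v \<in> \<Union>(set (B @ map ((\<union>) L) R1 @ A))"
    then have "v \<in> L \<union> \<Union>(set (B @ A)) \<or> v \<in> \<Union>(set R1)"
      by (auto split: if_splits)
    then show "assigned_outside (QNode secs) (a # r) v"
      using s'(3) t1(4) assigned_outside_Cons assigned_outside_child[OF ta(1)] by blast
  qed
  moreover have "cliques s' = B @ (L \<union> C1) # (map ((\<union>) L) R1 @ A)"
    using s'(2) t1(2) by simp
  moreover have "S \<subseteq> L \<union> C1" "x \<in> L \<union> C1" using t1(3) \<open>x \<in> L\<close> by auto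
  ultimately show ?thesis using that s'(1) by blast
qed

lemma rotable_subtree_arrangement:
  assumes leaf: "sub s (a # r) = Some (PNode S [])"
    and ends: "\<forall>m<length r. \<forall>secs. sub s (a # take m r) = Some (QNode secs) \<longrightarrow>
                 r ! m = 0 \<or> r ! m = length secs - 1"
    and x: "x \<in> node_verts s" "\<And>p. assigned_at s x p \<Longrightarrow> p = []"
    and start: "is_P s \<or> (\<exists>secs l h. s = QNode secs \<and>
                 (\<forall>i<length secs. x \<in> fst (secs ! i) \<longleftrightarrow> l \<le> i \<and> i \<le> h) \<and> (a = l \<or> a = h))"
  obtains s' P C R where "variant s s'" "cliques s' = P @ C # R" "S \<subseteq> C" "x \<in> C"
    "x \<notin> \<Union>(set P)" "\<forall>v\<in>\<Union>(set (P @ R)). assigned_outside s (a # r) v"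
  using start
proof
  assume P: "is_P s"
  have "\<forall>m<length (a # r). \<forall>secs. sub s (take m (a # r)) = Some (QNode secs) \<longrightarrow>
      (a # r) ! m = 0 \<or> (a # r) ! m = length secs - 1"
  proof (intro allI impI)
    fix m secs assume "m < length (a # r)" "sub s (take m (a # r)) = Some (QNode secs)"
    then show "(a # r) ! m = 0 \<or> (a # r) ! m = length secs - 1"
      using P ends by (cases m) (auto simp: is_P_def)
  qed
  then obtain s' C R where "variant s s'" "cliques s' = C # R" "S \<subseteq> C" "node_verts s \<subseteq> C"
    "\<forall>v\<in>\<Union>(set R). assigned_outside s (a # r) v"
    using variant_leaf_first[OF leaf] P by metis
  then show ?thesis using that[of s' "[]" C R] x(1) by auto
next
  assume "\<exists>secs l h. s = QNode secs \<and>
    (\<forall>i<length secs. x \<in> fst (secs ! i) \<longleftrightarrow> l \<le> i \<and> i \<le> h) \<and> (a = l \<or> a = h)"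
  then obtain secs l h where "s = QNode secs"
    "\<And>i. i < length secs \<Longrightarrow> x \<in> fst (secs ! i) \<longleftrightarrow> l \<le> i \<and> i \<le> h" "a = l \<or> a = h"
    by blast
  then show ?thesis using QNode_leaf_first_arrangement[of secs a r S x l h] leaf ends x that by blast
qed

lemma assigned_at_iff_node:
  assumes "MPQ_tree V E T" "v \<in> V"
  shows "assigned_at T v p \<longleftrightarrow> p = node T v"
proof -
  have "\<forall>v\<in>V. \<exists>!p. \<exists>t. sub T p = Some t \<and> v \<in> node_verts t"
    using assms(1) unfolding MPQ_tree_def by (elim conjE)
  then have "\<exists>!p. assigned_at T v p" using assms(2) by (simp add: assigned_at_def)
  then show ?thesis
    unfolding node_def assigned_at_def[symmetric] by (metis theI')
qed

lemma not_assigned_outside_node: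
  assumes "MPQ_tree V E T" "v \<in> V" "prefix p (node T v)"
  shows "\<not> assigned_outside T p v"
  using assms assigned_at_iff_node[OF assms(1,2)] by (auto simp: assigned_outside_def)

lemma assigned_outside_append:
  "sub t q = Some u \<Longrightarrow> assigned_outside u p v \<Longrightarrow> assigned_outside t (q @ p) v"
  unfolding assigned_outside_def by (metis assigned_at_append same_prefix_prefix)

lemma sub_QNode_index:
  assumes "sub t (p @ j # q) = Some u" "sub t p = Some (QNode secs)"
  shows "j < length secs"
  using assms by (simp add: sub_append split: if_splits)

lemma QNode_vertex_span:
  assumes "MPQ_tree V E T" "v \<in> V" "sub T (node T v) = Some (QNode secs)" "i < length secs"
  shows "v \<in> fst (secs ! i) \<longleftrightarrow> lpos T v \<le> i \<and> i \<le> rpos T v"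
proof -
  have "v \<in> node_verts (QNode secs)"
    using assigned_at_iff_node[OF assms(1,2), of "node T v"] assms(3) by (simp add: assigned_at_def)
  moreover have "\<forall>p secs. sub T p = Some (QNode secs) \<longrightarrow>
      (\<forall>v \<in> node_verts (QNode secs). \<exists>l r. l < r \<and> r < length secs \<and>
         (\<forall>i<length secs. v \<in> fst (secs ! i) \<longleftrightarrow> l \<le> i \<and> i \<le> r))"
    using assms(1) unfolding MPQ_tree_def by (elim conjE)
  ultimately obtain l r where lr: "l < r" "r < length secs"
    "\<And>i. i < length secs \<Longrightarrow> v \<in> fst (secs ! i) \<longleftrightarrow> l \<le> i \<and> i \<le> r"
    using assms(3) by blast
  have "(LEAST i. v \<in> fst (secs ! i)) = l"
  proof (rule Least_equality)
    show "v \<in> fst (secs ! l)" using lr by simp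
    show "l \<le> i" if "v \<in> fst (secs ! i)" for i
      using lr that by (cases "i < length secs") auto
  qed
  moreover have "(GREATEST i. i < length secs \<and> v \<in> fst (secs ! i)) = r"
    by (rule Greatest_equality) (use lr in auto)
  ultimately show ?thesis using lr(3)[OF assms(4)] assms(3) by (simp add: lpos_def rpos_def)
qed

lemma rotable_subtree_conditions:
  assumes T: "MPQ_tree V E T" and x: "x \<in> V" and s: "sub T (node T x) = Some s"
    and path: "node T y = node T x @ a # r" and rot: "rotable T x y"
  shows "\<exists>S. sub s (a # r) = Some (PNode S [])"
    and "\<forall>m<length r. \<forall>secs. sub s (a # take m r) = Some (QNode secs) \<longrightarrow>
           r ! m = 0 \<or> r ! m = length secs - 1"
    and "is_P s \<or> (\<exists>secs l h. s = QNode secs \<and>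
           (\<forall>i<length secs. x \<in> fst (secs ! i) \<longleftrightarrow> l \<le> i \<and> i \<le> h) \<and> (a = l \<or> a = h))"
proof -
  from rot have leaf: "ends_in_P_leaf T y" and central: "\<not> through_central T x y"
    and start: "starts_in_P T x \<or> starts_non_central T x y"
    by (auto simp: rotable_def almost_rotable_def)
  from leaf obtain S where "sub T (node T y) = Some (PNode S [])"
    by (auto simp: ends_in_P_leaf_def)
  then have leaf_s: "sub s (a # r) = Some (PNode S [])"
    using s path by (simp add: sub_append)
  then show "\<exists>S. sub s (a # r) = Some (PNode S [])" ..
  show "\<forall>m<length r. \<forall>secs. sub s (a # take m r) = Some (QNode secs) \<longrightarrow>
      r ! m = 0 \<or> r ! m = length secs - 1"
  proof (intro allI impI)
    fix m secs assume m: "m < length r" "sub s (a # take m r) = Some (QNode secs)"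
    let ?k = "Suc (length (node T x) + m)"
    have "sub T (take ?k (node T y)) = Some (QNode secs)" "node T y ! ?k = r ! m"
      "length (node T x) < ?k" "?k < length (node T y)"
      using m s path by (simp_all add: sub_append nth_append)
    then have "\<not> (0 < r ! m \<and> r ! m < length secs - 1)"
      using central unfolding through_central_def by metis
    moreover have "sub s ((a # take m r) @ r ! m # drop (Suc m) r) = Some (PNode S [])"
      using leaf_s id_take_nth_drop[OF m(1)] by simp
    then have "r ! m < length secs" using m(2) by (rule sub_QNode_index)
    ultimately show "r ! m = 0 \<or> r ! m = length secs - 1" by linarith
  qed
  show "is_P s \<or> (\<exists>secs l h. s = QNode secs \<and>
      (\<forall>i<length secs. x \<in> fst (secs ! i) \<longleftrightarrow> l \<le> i \<and> i \<le> h) \<and> (a = l \<or> a = h))"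
    using start
  proof
    assume "starts_in_P T x"
    then show ?thesis using s by (auto simp: starts_in_P_def is_P_def)
  next
    assume "starts_non_central T x y"
    then obtain secs where "sub T (node T x) = Some (QNode secs)"
      "a = lpos T x \<or> a = rpos T x"
      using path by (auto simp: starts_non_central_def)
    then show ?thesis using s QNode_vertex_span[OF T x] by auto
  qed
qed

lemma rotable_isolating_variant:
  assumes T: "MPQ_tree V E T" and xy: "x \<in> V" "y \<in> V"
    and over: "over T x y" "node T x \<noteq> node T y" and rot: "rotable T x y"
  obtains T' P C R where "variant T T'" "cliques T' = P @ C # R" "x \<in> C" "y \<in> C"
    "y \<notin> \<Union>(set (P @ R))" "x \<notin> \<Union>(set P)"
proof -
  obtain q where "node T y = node T x @ q" using over(1) by (auto simp: over_def)
  moreover have "q \<noteq> []" using calculation over(2) by auto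
  ultimately obtain a r where path: "node T y = node T x @ a # r" by (cases q) auto
  obtain s where s: "sub T (node T x) = Some s" "x \<in> node_verts s"
    using assigned_at_iff_node[OF T xy(1), of "node T x"] by (auto simp: assigned_at_def)
  note conds = rotable_subtree_conditions[OF T xy(1) s(1) path rot]
  obtain S where leaf: "sub s (a # r) = Some (PNode S [])" using conds(1) by blast
  have x_root: "p = []" if "assigned_at s x p" for p
    using assigned_at_append[OF s(1) that] assigned_at_iff_node[OF T xy(1)] by simp
  obtain s' P C R where s': "variant s s'" "cliques s' = P @ C # R" "S \<subseteq> C" "x \<in> C"
    "x \<notin> \<Union>(set P)" "\<forall>v\<in>\<Union>(set (P @ R)). assigned_outside s (a # r) v"
    by (rule rotable_subtree_arrangement[OF leaf conds(2) s(2) x_root conds(3)])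
  obtain T' pre U post where T': "variant T T'" "cliques T' = pre @ map ((\<union>) U) (cliques s') @ post"
    "\<forall>v\<in>U \<union> \<Union>(set (pre @ post)). assigned_outside T (node T x) v"
    by (rule variant_in_context[OF s(1) s'(1)])
  have "y \<in> S"
    using assigned_at_iff_node[OF T xy(2), of "node T y"] s(1) leaf path
    by (simp add: assigned_at_def sub_append)
  have "\<not> assigned_outside T (node T x) x" "\<not> assigned_outside T (node T x) y"
    by (rule not_assigned_outside_node[OF T xy(1)], simp)
       (rule not_assigned_outside_node[OF T xy(2)], simp add: path)
  then have outer: "x \<notin> U \<union> \<Union>(set (pre @ post))" "y \<notin> U \<union> \<Union>(set (pre @ post))"
    using T'(3) by blast+
  have inner: "y \<notin> \<Union>(set (P @ R))"
    using s'(6) assigned_outside_append[OF s(1)] not_assigned_outside_node[OF T xy(2)] path by auto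
  show ?thesis
  proof (rule that[OF T'(1)])
    show "cliques T' = (pre @ map ((\<union>) U) P) @ (U \<union> C) # (map ((\<union>) U) R @ post)"
      using T'(2) s'(2) by simp
    show "x \<in> U \<union> C" "y \<in> U \<union> C" using s'(3,4) \<open>y \<in> S\<close> by auto
    show "y \<notin> \<Union>(set ((pre @ map ((\<union>) U) P) @ map ((\<union>) U) R @ post))"
      using outer(2) inner by auto
    show "x \<notin> \<Union>(set (pre @ map ((\<union>) U) P))"
      using outer(1) s'(5) by auto
  qed
qed

lemma variant_clique_order:
  assumes "MPQ_tree V E T" "variant T T'"
  shows "set (cliques T') = max_cliques V E" "\<forall>v\<in>V. consecutive (cliques T') v"
proof -
  have "{cliques T' | T'. variant T T'} =
      {L. distinct L \<and> set L = max_cliques V E \<and> (\<forall>v\<in>V. consecutive L v)}"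
    using assms(1) unfolding MPQ_tree_def by (elim conjE)
  then have "cliques T' \<in> {L. distinct L \<and> set L = max_cliques V E \<and> (\<forall>v\<in>V. consecutive L v)}"
    using assms(2) by blast
  then show "set (cliques T') = max_cliques V E" "\<forall>v\<in>V. consecutive (cliques T') v" by auto
qed

theorem mainTheorem6:
  fixes n :: nat and E :: "nat set set" and T :: mpq and x y :: nat
  assumes "interval_graph {1..n} E"
    and "MPQ_tree {1..n} E T"
    and "{x, y} \<in> E"
    and "over T x y"
    and "node T x \<noteq> node T y"
    and "rotable T x y"
  shows "interval_edge {1..n} E x y"
proof -
  have G: "simple_graph {1..n} E" using assms(1) by (simp add: interval_graph_def)
  then have xy: "x \<in> {1..n}" "y \<in> {1..n}" "x \<noteq> y"
    using assms(3) unfolding simple_graph_def by (auto simp: doubleton_eq_iff)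
  obtain T' P C R where "variant T T'" "cliques T' = P @ C # R" "x \<in> C" "y \<in> C"
    "y \<notin> \<Union>(set (P @ R))" "x \<notin> \<Union>(set P)"
    by (rule rotable_isolating_variant[OF assms(2) xy(1,2) assms(4-6)])
  then have "interval_graph {1..n} (E - {{x, y}})"
    using interval_graph_delete_edge[OF G variant_clique_order[OF assms(2)]] xy by blast
  then show ?thesis using assms(1,3) by (simp add: interval_edge_def)
qed

end
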